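(* Under the standing assumptions, there exists a unique $\lambda\in(L^2_{M^{-1}}(\mathbb R^d))^d$ satisfying $Q(\lambda)=\nabla_vM$ (componentwise) and $\int_{\mathbb R^d}\lambda(v)\,dv=0$. Moreover there is $C$ such that $|\lambda(v)|\le CM(v)$ and $|\partial_{v_i}\lambda_j(v)|\le CM(v)$ for all $v\in\mathbb R^d$ and $1\le i,j\le d$.
   Context: Standing assumptions: $d\ge1$, $\alpha\in[1,2)$. $M:\mathbb R^d\to(0,\infty)$ satisfies $M(v)=M(-v)$, $\int M\,dv=1$, $|v|^{d+\alpha}M(v)\to\gamma>0$ as $|v|\to\infty$, $|\nabla_vM(v)|\le CM(v)/(1+|v|)$ and $|D_v^2M(v)|\le CM(v)$. The cross section $\sigma:\mathbb R^d\times\mathbb R^d\to\mathbb R$ satisfies $\sigma(v,v')=\sigma(v',v)$, $\nu_1\le\sigma\le\nu_2$ for constants $0<\nu_1\le\nu_2$, $|\nabla_v\sigma(v',v)|\le C/(1+|v|)$, and $|\sigma(v,v')-\nu_0|\le C/(1+|v|)$ for all $v,v'$, for some constant $\nu_0$. The collision frequency $\nu(v):=\int\sigma(v',v)M(v')\,dv'$ is assumed even. The linear Boltzmann operator is $Q(f)(v)=\int[\sigma(v,v')M(v)f(v')-\sigma(v',v)M(v')f(v)]\,dv'$. For a positive weight $w$, $L^2_{w^{-1}}$ denotes the $L^2$ space with norm $(\int|f|^2/w)^{1/2}$. *)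

theory Defs
  imports "HOL-Analysis.Analysis"
begin

text \<open>Velocity space R^d is modelled as real^'d for a finite index type 'd (so d = CARD('d) \<ge> 1).\<close>

definition Qop :: "(real^'d::finite \<Rightarrow> real^'d \<Rightarrow> real) \<Rightarrow> (real^'d \<Rightarrow> real)
                    \<Rightarrow> (real^'d \<Rightarrow> real) \<Rightarrow> real^'d \<Rightarrow> real" where
  "Qop \<sigma> M f v = (\<integral>v'. (\<sigma> v v' * M v * f v' - \<sigma> v' v * M v' * f v) \<partial>lborel)"

definition L2w :: "(real^'d::finite \<Rightarrow> real) \<Rightarrow> (real^'d \<Rightarrow> real) \<Rightarrow> bool" where
  "L2w w f \<longleftrightarrow> f \<in> borel_measurable lborel \<and> integrable lborel (\<lambda>v. (f v)\<^sup>2 / w v)"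

end

theory Submission
  imports Defs
begin

text \<open>Let \<open>nu v = \<integral> \<sigma>(v',v) M(v') dv'\<close> be the collision frequency and
  \<open>T z v = \<integral> \<sigma>(v',v) M(v') z(v') / nu(v') dv'\<close>. Then \<open>Q (M z / nu) = M (T z - z)\<close>, so
  \<open>Q f = h\<close> becomes the fixed-point problem \<open>z = T z - h / M\<close>. The operator \<open>T\<close> preserves the
  mass \<open>\<integral> z M\<close>, and since \<open>\<sigma> \<ge> \<nu>1 \<ge> (\<nu>1/\<nu>2) nu\<close>, the part \<open>(\<nu>1/\<nu>2) nu\<close> of its kernel does
  not depend on the outgoing velocity and cancels on functions of zero mass; hence \<open>T\<close> contracts
  the \<open>L\<^sup>1(M)\<close>-norm of such functions by the factor \<open>1 - \<nu>1/\<nu>2\<close> (Doeblin's argument).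
  For \<open>\<integral> h = 0\<close> the Neumann series therefore solves the fixed-point problem, and adding a
  multiple of \<open>M\<close>, which spans the kernel of \<open>Q\<close>, normalises \<open>\<integral> f = 0\<close>; the same contraction
  gives uniqueness. Since \<open>T\<close> maps \<open>L\<^sup>1(M)\<close> into bounded functions with bounded derivatives,
  \<open>|f|\<close> and \<open>|\<partial>\<^sub>i f|\<close> are bounded by a multiple of \<open>M\<close>. Finally \<open>h = \<partial>\<^sub>j M\<close> has zero integral
  because \<open>M\<close> is even.\<close>

lemma abs_le_square_div_add:
  fixes x m :: real
  assumes "0 < m"
  shows "\<bar>x\<bar> \<le> x\<^sup>2 / m + m"
proof -
  have "2 * \<bar>x\<bar> * m \<le> x\<^sup>2 + m\<^sup>2"
    using sum_squares_bound[of "\<bar>x\<bar>" m] by (simp add: power2_eq_square)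
  moreover have "0 \<le> \<bar>x\<bar> * m" using assms by simp
  ultimately have "\<bar>x\<bar> * m \<le> x\<^sup>2 + m\<^sup>2" by linarith
  then have "\<bar>x\<bar> \<le> (x\<^sup>2 + m\<^sup>2) / m" using assms by (simp add: pos_le_divide_eq)
  also have "\<dots> = x\<^sup>2 / m + m" using assms by (simp add: add_divide_distrib power2_eq_square)
  finally show ?thesis .
qed

lemma quotient_derivative_bound:
  fixes a da n dn m A A' N' n1 :: real
  assumes n1: "0 < n1" "n1 \<le> n"
    and a: "\<bar>a\<bar> \<le> A * m" and da: "\<bar>da\<bar> \<le> A' * m" and dn: "\<bar>dn\<bar> \<le> N'"
  shows "\<bar>(da * n - a * dn) / (n * n)\<bar> \<le> m * (A' / n1 + A * N' / (n1 * n1))"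
proof -
  have n: "0 < n" using n1 by linarith
  have "\<bar>da / n\<bar> \<le> A' * m / n1"
    using n n1 da by (simp add: frac_le)
  moreover have "\<bar>a * dn / (n * n)\<bar> \<le> A * m * N' / (n1 * n1)"
  proof -
    have "\<bar>a * dn\<bar> \<le> A * m * N'"
      unfolding abs_mult using a dn by (intro mult_mono) auto
    moreover have "n1 * n1 \<le> n * n" using n1 by (intro mult_mono) auto
    ultimately show ?thesis
      using n n1 by (simp add: frac_le)
  qed
  moreover have "(da * n - a * dn) / (n * n) = da / n - a * dn / (n * n)"
    using n by (simp add: field_simps)
  ultimately have "\<bar>(da * n - a * dn) / (n * n)\<bar> \<le> A' * m / n1 + A * m * N' / (n1 * n1)"
    by (smt (verit))
  then show ?thesis by (simp add: algebra_simps)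
qed

lemma has_real_derivative_along_line:
  fixes f :: "'a::real_normed_vector \<Rightarrow> real"
  assumes "(f has_derivative f') (at v)"
  shows "((\<lambda>t. f (v + t *\<^sub>R e)) has_real_derivative f' e) (at 0)"
proof -
  have "((\<lambda>t. v + t *\<^sub>R e) has_derivative (\<lambda>t. t *\<^sub>R e)) (at 0)"
    by (auto intro!: derivative_eq_intros)
  from diff_chain_at[OF this, of f f'] assms
  have "((\<lambda>t. f (v + t *\<^sub>R e)) has_derivative (\<lambda>t. f' (t *\<^sub>R e))) (at 0)"
    by (simp add: comp_def)
  then show ?thesis
    by (rule has_derivative_imp_has_field_derivative)
      (simp add: linear_simps(5)[OF has_derivative_bounded_linear[OF assms]])
qed

lemma integrable_abs_le:
  fixes f g :: "'a \<Rightarrow> real"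
  assumes "integrable N f" "g \<in> borel_measurable N" "\<And>x. \<bar>g x\<bar> \<le> f x"
  shows "integrable N g"
  using assms(3) by (intro Bochner_Integration.integrable_bound[OF assms(1,2)])
    (auto intro!: order_trans[OF _ abs_ge_self])

lemma integrable_lborel_pair_abs_le:
  fixes F :: "'a::euclidean_space \<times> 'b::euclidean_space \<Rightarrow> real"
  assumes f: "integrable lborel f" and g: "integrable lborel g"
    and [measurable]: "F \<in> borel_measurable (lborel \<Otimes>\<^sub>M lborel)"
    and F: "\<And>x y. \<bar>F (x, y)\<bar> \<le> f x * g y"
  shows "integrable (lborel \<Otimes>\<^sub>M lborel) F"
proof (rule integrable_abs_le)
  have [measurable]: "f \<in> borel_measurable lborel" "g \<in> borel_measurable lborel" using f g by auto
  have "integrable lborel (\<lambda>x. \<bar>f x\<bar> * (\<integral>y. \<bar>g y\<bar> \<partial>lborel))" using f by auto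
  then show "integrable (lborel \<Otimes>\<^sub>M lborel) (\<lambda>p. f (fst p) * g (snd p))"
    using g by (intro lborel_pair.Fubini_integrable) (auto simp: abs_mult)
qed (use F in auto)

lemma distr_uminus_lborel_cart: "distr lborel borel uminus = (lborel :: (real^'d::finite) measure)"
proof -
  have "(lborel :: (real^'d) measure)
      = density (distr lborel borel (\<lambda>x. 0 + (-1::real) *\<^sub>R x)) (\<lambda>_. \<bar>-1::real\<bar> ^ DIM(real^'d))"
    by (rule lborel_affine) simp
  then show ?thesis by (simp add: density_1)
qed

lemma lborel_integral_reflect_cart:
  fixes f :: "real^'d::finite \<Rightarrow> real"
  assumes [measurable]: "f \<in> borel_measurable borel"
  shows "(\<integral>x. f (- x) \<partial>lborel) = (\<integral>x. f x \<partial>lborel)"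
proof -
  have "(\<integral>x. f x \<partial>lborel) = (\<integral>x. f x \<partial>(distr lborel borel uminus))"
    by (simp add: distr_uminus_lborel_cart)
  also have "\<dots> = (\<integral>x. f (- x) \<partial>lborel)" by (rule integral_distr) auto
  finally show ?thesis by simp
qed

lemma integrable_cart_componentwise:
  fixes G :: "'a \<Rightarrow> real^'n::finite"
  assumes "\<And>j. integrable N (\<lambda>v. G v $ j)"
  shows "integrable N G"
proof -
  have "G = (\<lambda>v. \<Sum>j\<in>UNIV. (G v $ j) *\<^sub>R axis j 1)"
    by (simp add: fun_eq_iff basis_expansion[symmetric] scalar_mult_eq_scaleR[symmetric])
  moreover have "integrable N (\<lambda>v. \<Sum>j\<in>UNIV. (G v $ j) *\<^sub>R axis j (1::real))"
    using assms by auto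
  ultimately show ?thesis by simp
qed

lemma integral_vec_nth:
  fixes G :: "'a \<Rightarrow> real^'n::finite"
  assumes "integrable N G"
  shows "(\<integral>v. G v \<partial>N) $ j = (\<integral>v. G v $ j \<partial>N)"
  using integral_bounded_linear[OF bounded_linear_vec_nth assms, of j] by simp

section \<open>Collision frequency and transfer operator\<close>

locale linear_boltzmann =
  fixes M :: "real^'d::finite \<Rightarrow> real"
    and gradM :: "real^'d \<Rightarrow> real^'d"
    and DgradM :: "real^'d \<Rightarrow> real^'d \<Rightarrow> real^'d"
    and \<sigma> :: "real^'d \<Rightarrow> real^'d \<Rightarrow> real"
    and D\<sigma> :: "real^'d \<Rightarrow> real^'d \<Rightarrow> real^'d \<Rightarrow> real"
    and C \<nu>1 \<nu>2 :: real
  assumes M_pos: "\<And>v. M v > 0"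
    and M_even: "\<And>v. M (- v) = M v"
    and M_int: "integrable lborel M"
    and M_int1: "(\<integral>v. M v \<partial>lborel) = 1"
    and M_grad: "\<And>v. (M has_derivative (\<lambda>h. gradM v \<bullet> h)) (at v)"
    and M_grad_bound: "\<And>v. norm (gradM v) \<le> C * M v / (1 + norm v)"
    and M_hess: "\<And>v. (gradM has_derivative DgradM v) (at v)"
    and M_hess_bound: "\<And>v. onorm (DgradM v) \<le> C * M v"
    and sigma_sym: "\<And>v v'. \<sigma> v v' = \<sigma> v' v"
    and nu1_pos: "0 < \<nu>1"
    and sigma_bounds: "\<And>v v'. \<nu>1 \<le> \<sigma> v v' \<and> \<sigma> v v' \<le> \<nu>2"
    and sigma_grad: "\<And>v' v. ((\<lambda>u. \<sigma> v' u) has_derivative D\<sigma> v' v) (at v)"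
    and sigma_grad_bound: "\<And>v' v. onorm (D\<sigma> v' v) \<le> C / (1 + norm v)"
begin

lemma C_nonneg: "0 \<le> C"
proof -
  have "0 \<le> C * M 0 / (1 + norm (0::real^'d))" using M_grad_bound[of 0] norm_ge_zero order_trans by blast
  then show ?thesis using M_pos[of 0] by (simp add: zero_le_mult_iff)
qed

lemma divide_one_plus_norm_le: "0 \<le> c \<Longrightarrow> c / (1 + norm (x::real^'d)) \<le> c"
  using divide_left_mono[of 1 "1 + norm x" c] by (simp add: add_pos_nonneg)

lemma nu1_le_nu2: "\<nu>1 \<le> \<nu>2"
  using sigma_bounds[of 0 0] by auto

lemma nu2_pos: "0 < \<nu>2"
  using nu1_pos nu1_le_nu2 by linarith

lemma abs_sigma_le: "\<bar>\<sigma> v v'\<bar> \<le> \<nu>2"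
  using sigma_bounds[of v v'] nu1_pos by auto

lemma abs_M: "\<bar>z * M v\<bar> = \<bar>z\<bar> * M v"
  using M_pos[of v] by (simp add: abs_mult)

lemma sigma_lipschitz_right: "\<bar>\<sigma> a b - \<sigma> a b'\<bar> \<le> C * norm (b - b')"
proof -
  have "onorm (D\<sigma> a x) \<le> C" for x
    using sigma_grad_bound[of a x] divide_one_plus_norm_le[OF C_nonneg, of x] by linarith
  then have "norm ((\<lambda>u. \<sigma> a u) b - (\<lambda>u. \<sigma> a u) b') \<le> C * norm (b - b')"
    using sigma_grad by (intro differentiable_bound[where S=UNIV and f'="D\<sigma> a"]) auto
  then show ?thesis by simp
qed

lemma continuous_on_sigma: "continuous_on UNIV (\<lambda>p. \<sigma> (fst p) (snd p))"
proof (rule lipschitz_on_continuous_on[OF lipschitz_onI[where L="2 * C"]])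
  fix p q :: "(real^'d) \<times> (real^'d)"
  have "\<bar>\<sigma> (fst q) (snd q) - \<sigma> (fst p) (snd q)\<bar> \<le> C * norm (fst q - fst p)"
    using sigma_lipschitz_right[of "snd q" "fst q" "fst p"] by (simp add: sigma_sym[of "snd q"])
  also have "\<dots> \<le> C * dist q p"
    using dist_fst_le[of q p] C_nonneg by (intro mult_left_mono) (simp_all add: dist_norm)
  finally have 1: "\<bar>\<sigma> (fst q) (snd q) - \<sigma> (fst p) (snd q)\<bar> \<le> C * dist q p" .
  have "\<bar>\<sigma> (fst p) (snd q) - \<sigma> (fst p) (snd p)\<bar> \<le> C * norm (snd q - snd p)"
    by (rule sigma_lipschitz_right)
  also have "\<dots> \<le> C * dist q p"
    using dist_snd_le[of q p] C_nonneg by (intro mult_left_mono) (simp_all add: dist_norm)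
  finally have 2: "\<bar>\<sigma> (fst p) (snd q) - \<sigma> (fst p) (snd p)\<bar> \<le> C * dist q p" .
  from 1 2 show "dist (\<sigma> (fst q) (snd q)) (\<sigma> (fst p) (snd p)) \<le> 2 * C * dist q p"
    by (simp add: dist_real_def)
qed (use C_nonneg in simp)

lemma measurable_sigma[measurable (raw)]:
  assumes [measurable]: "f \<in> N \<rightarrow>\<^sub>M lborel" "g \<in> N \<rightarrow>\<^sub>M lborel"
  shows "(\<lambda>x. \<sigma> (f x) (g x)) \<in> borel_measurable N"
proof -
  have \<sigma>: "(\<lambda>p. \<sigma> (fst p) (snd p)) \<in> borel_measurable (lborel \<Otimes>\<^sub>M lborel)"
    using borel_measurable_continuous_onI[OF continuous_on_sigma]
    unfolding lborel_prod by simp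
  have "(\<lambda>x. (f x, g x)) \<in> N \<rightarrow>\<^sub>M lborel \<Otimes>\<^sub>M lborel" by measurable
  from measurable_comp[OF this \<sigma>] show ?thesis by (simp add: comp_def)
qed

lemma M_measurable[measurable]: "M \<in> borel_measurable lborel"
proof -
  have "continuous_on UNIV M"
    using M_grad has_derivative_continuous continuous_at_imp_continuous_on by blast
  from borel_measurable_continuous_onI[OF this] show ?thesis by simp
qed

lemma continuous_on_gradM: "continuous_on UNIV gradM"
  using M_hess has_derivative_continuous continuous_at_imp_continuous_on by blast

lemma integrable_abs_le_M:
  fixes g :: "real^'d \<Rightarrow> real"
  assumes "g \<in> borel_measurable lborel" "\<And>x. \<bar>g x\<bar> \<le> K * M x"
  shows "integrable lborel g"
  using M_int by (intro integrable_abs_le[OF _ assms]) simp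

lemma integrable_sigma_mult:
  assumes "integrable lborel \<phi>"
  shows "integrable lborel (\<lambda>v'. \<sigma> v' v * \<phi> v')"
proof (rule integrable_abs_le[of _ "\<lambda>v'. \<nu>2 * \<bar>\<phi> v'\<bar>"])
  show "integrable lborel (\<lambda>v'. \<nu>2 * \<bar>\<phi> v'\<bar>)" using assms by auto
  show "(\<lambda>v'. \<sigma> v' v * \<phi> v') \<in> borel_measurable lborel" using assms by measurable
  show "\<bar>\<sigma> x v * \<phi> x\<bar> \<le> \<nu>2 * \<bar>\<phi> x\<bar>" for x
    unfolding abs_mult using abs_sigma_le[of x v] by (simp add: mult_right_mono)
qed

definition nu :: "real^'d \<Rightarrow> real" where
  "nu v = (\<integral>v'. \<sigma> v' v * M v' \<partial>lborel)"

lemma nu_bounds: "\<nu>1 \<le> nu v" "nu v \<le> \<nu>2"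
proof -
  have i: "integrable lborel (\<lambda>v'. \<sigma> v' v * M v')" by (rule integrable_sigma_mult[OF M_int])
  have "(\<integral>v'. \<nu>1 * M v' \<partial>lborel) \<le> nu v"
    unfolding nu_def using M_int i sigma_bounds M_pos
    by (intro integral_mono) (auto intro: mult_right_mono less_imp_le)
  moreover have "nu v \<le> (\<integral>v'. \<nu>2 * M v' \<partial>lborel)"
    unfolding nu_def using M_int i sigma_bounds M_pos
    by (intro integral_mono) (auto intro: mult_right_mono less_imp_le)
  ultimately show "\<nu>1 \<le> nu v" "nu v \<le> \<nu>2" using M_int1 by simp_all
qed

lemma nu_pos: "0 < nu v"
  using nu_bounds(1)[of v] nu1_pos by linarith

lemma nu_measurable[measurable]: "nu \<in> borel_measurable lborel"
  unfolding nu_def[abs_def] by measurable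

lemma directional_derivative_sigma_integral:
  assumes \<phi>: "integrable lborel \<phi>"
  shows "((\<lambda>t. \<integral>v'. \<sigma> v' (v + t *\<^sub>R e) * \<phi> v' \<partial>lborel) has_real_derivative
            (\<integral>v'. D\<sigma> v' v e * \<phi> v' \<partial>lborel)) (at 0)"
    and "\<bar>\<integral>v'. D\<sigma> v' v e * \<phi> v' \<partial>lborel\<bar> \<le> C * norm e * (\<integral>v'. \<bar>\<phi> v'\<bar> \<partial>lborel)"
proof -
  have [measurable]: "\<phi> \<in> borel_measurable lborel" using \<phi> by auto
  have lin: "bounded_linear (D\<sigma> v' v)" for v' using sigma_grad has_derivative_bounded_linear by blast
  have D_bound: "\<bar>D\<sigma> v' v e\<bar> \<le> C * norm e" for v'
  proof -
    have "\<bar>D\<sigma> v' v e\<bar> \<le> onorm (D\<sigma> v' v) * norm e" using onorm[OF lin[of v'], of e] by simp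
    also have "\<dots> \<le> C * norm e"
      using sigma_grad_bound[of v' v] divide_one_plus_norm_le[OF C_nonneg, of v]
      by (intro mult_right_mono) auto
    finally show ?thesis .
  qed
  have difference_quotient: "((\<lambda>t. (\<sigma> v' (v + t *\<^sub>R e) - \<sigma> v' v) / t) \<longlongrightarrow> D\<sigma> v' v e) (at 0)" for v'
    using has_real_derivative_along_line[OF sigma_grad[of v' v], of e]
    unfolding has_field_derivative_iff by simp
  let ?G = "\<lambda>t. \<integral>v'. \<sigma> v' (v + t *\<^sub>R e) * \<phi> v' \<partial>lborel"
  let ?D = "\<lambda>v'. D\<sigma> v' v e * \<phi> v'"
  \<comment> \<open>dominated convergence along every sequence \<open>X \<longlonglongrightarrow> 0\<close>, with the Lipschitz bound
    on \<open>\<sigma>\<close> as majorant\<close>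
  have sequential: "(\<lambda>i. (?G (X i) - ?G 0) / (X i - 0)) \<longlonglongrightarrow> integral\<^sup>L lborel ?D
            \<and> integrable lborel ?D"
    if X: "\<And>i. X i \<noteq> 0" "X \<longlonglongrightarrow> 0" for X :: "nat \<Rightarrow> real"
  proof -
    define s where "s i v' = (\<sigma> v' (v + X i *\<^sub>R e) * \<phi> v' - \<sigma> v' v * \<phi> v') / X i" for i v'
    have s_eq: "(?G (X i) - ?G 0) / (X i - 0) = integral\<^sup>L lborel (s i)" for i
      unfolding s_def using integrable_sigma_mult[OF \<phi>] by (simp add: integral_diff)
    have lim: "(\<lambda>i. s i v') \<longlonglongrightarrow> ?D v'" for v'
    proof -
      have "filterlim X (at 0) sequentially"
        using X by (intro filterlim_atI) auto
      from filterlim_compose[OF difference_quotient[of v'] this]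
      have "(\<lambda>i. (\<sigma> v' (v + X i *\<^sub>R e) - \<sigma> v' v) / X i * \<phi> v') \<longlonglongrightarrow> ?D v'"
        by (intro tendsto_intros) (simp add: comp_def)
      then show ?thesis unfolding s_def by (simp add: left_diff_distrib)
    qed
    have s_meas[measurable]: "s i \<in> borel_measurable lborel" for i unfolding s_def by measurable
    have D_meas: "?D \<in> borel_measurable lborel"
      by (rule borel_measurable_LIMSEQ_metric[OF s_meas lim])
    have bound: "norm (s i v') \<le> C * norm e * \<bar>\<phi> v'\<bar>" for i v'
    proof -
      have "\<bar>\<sigma> v' (v + X i *\<^sub>R e) - \<sigma> v' v\<bar> \<le> C * (\<bar>X i\<bar> * norm e)"
        using sigma_lipschitz_right[of v' "v + X i *\<^sub>R e" v] by simp
      then have "\<bar>\<sigma> v' (v + X i *\<^sub>R e) - \<sigma> v' v\<bar> / \<bar>X i\<bar> * \<bar>\<phi> v'\<bar> \<le> C * norm e * \<bar>\<phi> v'\<bar>"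
        using X(1)[of i] by (intro mult_right_mono) (simp_all add: divide_le_eq mult_ac)
      moreover have "norm (s i v') = \<bar>\<sigma> v' (v + X i *\<^sub>R e) - \<sigma> v' v\<bar> / \<bar>X i\<bar> * \<bar>\<phi> v'\<bar>"
        unfolding s_def by (simp add: left_diff_distrib[symmetric] abs_mult)
      ultimately show ?thesis by simp
    qed
    have "integrable lborel (\<lambda>v'. C * norm e * \<bar>\<phi> v'\<bar>)" using \<phi> by auto
    from integrable_dominated_convergence[where s=s, OF D_meas s_meas this]
      integral_dominated_convergence[where s=s, OF D_meas s_meas this]
    show ?thesis unfolding s_eq using lim bound by auto
  qed
  show "(?G has_real_derivative integral\<^sup>L lborel ?D) (at 0)"
    unfolding has_field_derivative_iff tendsto_at_iff_sequentially
    using sequential by (auto simp: comp_def)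
  have "(\<lambda>i. 1 / (real i + 1)) \<longlonglongrightarrow> 0"
    using LIMSEQ_inverse_real_of_nat by (simp add: inverse_eq_divide add.commute)
  then have "integrable lborel ?D"
    using sequential[of "\<lambda>i. 1 / (real i + 1)"] by simp
  then have "\<bar>integral\<^sup>L lborel ?D\<bar> \<le> (\<integral>v'. C * norm e * \<bar>\<phi> v'\<bar> \<partial>lborel)"
    using \<phi> D_bound
    by (intro integral_abs_bound_integral) (auto simp: abs_mult intro!: mult_right_mono)
  then show "\<bar>integral\<^sup>L lborel ?D\<bar> \<le> C * norm e * (\<integral>v'. \<bar>\<phi> v'\<bar> \<partial>lborel)" by simp
qed

definition dens :: "(real^'d \<Rightarrow> real) \<Rightarrow> real^'d \<Rightarrow> real" where
  "dens z v = M v * z v / nu v"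

definition transfer :: "(real^'d \<Rightarrow> real) \<Rightarrow> real^'d \<Rightarrow> real" where
  "transfer z v = (\<integral>v'. \<sigma> v' v * dens z v' \<partial>lborel)"

definition L1M :: "(real^'d \<Rightarrow> real) \<Rightarrow> bool" where
  "L1M z \<longleftrightarrow> z \<in> borel_measurable lborel \<and> integrable lborel (\<lambda>v. z v * M v)"

lemma L1M_measurable: "L1M z \<Longrightarrow> z \<in> borel_measurable lborel"
  by (simp add: L1M_def)

lemma L1M_integrable: "L1M z \<Longrightarrow> integrable lborel (\<lambda>v. z v * M v)"
  by (simp add: L1M_def)

lemma L1M_integrable_abs: "L1M z \<Longrightarrow> integrable lborel (\<lambda>v. \<bar>z v\<bar> * M v)"
  using integrable_abs[OF L1M_integrable] by (simp add: abs_M)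

lemma L1M_add_scaled: "L1M z1 \<Longrightarrow> L1M z2 \<Longrightarrow> L1M (\<lambda>v. z1 v + c * z2 v)"
  unfolding L1M_def by (auto simp: distrib_right mult.assoc)

lemma L1M_if_bounded:
  assumes "z \<in> borel_measurable lborel" "\<And>v. \<bar>z v\<bar> \<le> K"
  shows "L1M z"
  unfolding L1M_def
proof
  show "integrable lborel (\<lambda>v. z v * M v)"
  proof (rule integrable_abs_le_M[where K=K])
    show "\<bar>z v * M v\<bar> \<le> K * M v" for v
      unfolding abs_M using assms(2)[of v] M_pos[of v] by (simp add: mult_right_mono)
  qed (use assms(1) in measurable)
qed (fact assms(1))

lemma nu_mult_dens: "nu v * dens z v = z v * M v"
  unfolding dens_def using nu_pos[of v] by simp

lemma abs_dens_le: "\<bar>dens z v\<bar> \<le> \<bar>z v\<bar> * M v / \<nu>1"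
proof -
  have "\<bar>dens z v\<bar> = \<bar>z v\<bar> * M v / nu v"
    unfolding dens_def using nu_pos[of v] M_pos[of v] by (simp add: abs_mult mult_ac)
  also have "\<dots> \<le> \<bar>z v\<bar> * M v / \<nu>1"
    using nu_bounds(1)[of v] nu1_pos M_pos[of v] by (intro divide_left_mono) auto
  finally show ?thesis .
qed

lemma dens_measurable[measurable]:
  assumes [measurable]: "z \<in> borel_measurable lborel"
  shows "dens z \<in> borel_measurable lborel"
  unfolding dens_def[abs_def] by measurable

lemma integrable_dens:
  assumes "L1M z"
  shows "integrable lborel (dens z)"
proof (rule integrable_abs_le[OF _ _ abs_dens_le])
  show "integrable lborel (\<lambda>v. \<bar>z v\<bar> * M v / \<nu>1)"
    using L1M_integrable_abs[OF assms] by simp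
  show "dens z \<in> borel_measurable lborel"
    using L1M_measurable[OF assms] by measurable
qed

lemma integral_abs_dens_le:
  assumes "L1M z"
  shows "(\<integral>v. \<bar>dens z v\<bar> \<partial>lborel) \<le> (\<integral>v. \<bar>z v\<bar> * M v \<partial>lborel) / \<nu>1"
proof -
  have "(\<integral>v. \<bar>dens z v\<bar> \<partial>lborel) \<le> (\<integral>v. \<bar>z v\<bar> * M v / \<nu>1 \<partial>lborel)"
    using integrable_dens[OF assms] L1M_integrable_abs[OF assms] abs_dens_le
    by (intro integral_mono) auto
  then show ?thesis by simp
qed

lemma transfer_measurable[measurable]:
  assumes [measurable]: "z \<in> borel_measurable lborel"
  shows "transfer z \<in> borel_measurable lborel"
  unfolding transfer_def[abs_def] by measurable

lemma abs_transfer_le: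
  assumes "L1M z"
  shows "\<bar>transfer z v\<bar> \<le> \<nu>2 / \<nu>1 * (\<integral>v. \<bar>z v\<bar> * M v \<partial>lborel)"
proof -
  have "\<bar>\<sigma> v' v * dens z v'\<bar> \<le> \<nu>2 * \<bar>dens z v'\<bar>" for v'
    unfolding abs_mult using abs_sigma_le[of v' v] by (simp add: mult_right_mono)
  then have "\<bar>transfer z v\<bar> \<le> (\<integral>v'. \<nu>2 * \<bar>dens z v'\<bar> \<partial>lborel)"
    unfolding transfer_def using integrable_dens[OF assms]
    by (intro integral_abs_bound_integral integrable_sigma_mult) auto
  also have "\<dots> = \<nu>2 * (\<integral>v'. \<bar>dens z v'\<bar> \<partial>lborel)" by simp
  also have "\<dots> \<le> \<nu>2 * ((\<integral>v. \<bar>z v\<bar> * M v \<partial>lborel) / \<nu>1)"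
    by (rule mult_left_mono[OF integral_abs_dens_le[OF assms]]) (use nu2_pos in simp)
  finally show ?thesis by simp
qed

lemma L1M_transfer:
  assumes "L1M z"
  shows "L1M (transfer z)"
proof -
  have [measurable]: "z \<in> borel_measurable lborel" using assms by (rule L1M_measurable)
  show ?thesis
    by (rule L1M_if_bounded[OF _ abs_transfer_le[OF assms]]) measurable
qed

lemma integral_mult_M_transfer:
  assumes "L1M z"
  shows "(\<integral>v. transfer z v * M v \<partial>lborel) = (\<integral>v. z v * M v \<partial>lborel)"
proof -
  have [measurable]: "z \<in> borel_measurable lborel" using assms by (rule L1M_measurable)
  have dens_int: "integrable lborel (dens z)" by (rule integrable_dens[OF assms])
  define F where "F x y = dens z y * (\<sigma> y x * M x)" for x y
  have "integrable (lborel \<Otimes>\<^sub>M lborel) (case_prod F)"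
  proof (rule integrable_lborel_pair_abs_le[of "\<lambda>x. \<nu>2 * M x" "\<lambda>y. \<bar>dens z y\<bar>"])
    show "\<bar>case_prod F (x, y)\<bar> \<le> \<nu>2 * M x * \<bar>dens z y\<bar>" for x y
      unfolding F_def using abs_sigma_le[of y x] M_pos[of x]
      by (simp add: abs_mult mult_ac mult_left_mono mult_right_mono)
    show "case_prod F \<in> borel_measurable (lborel \<Otimes>\<^sub>M lborel)" unfolding F_def by measurable
  qed (use M_int dens_int in auto)
  then have "(\<integral>x. (\<integral>y. F x y \<partial>lborel) \<partial>lborel) = (\<integral>y. (\<integral>x. F x y \<partial>lborel) \<partial>lborel)"
    by (simp add: lborel_pair.Fubini_integral)
  moreover have "(\<integral>v. transfer z v * M v \<partial>lborel) = (\<integral>x. (\<integral>y. F x y \<partial>lborel) \<partial>lborel)"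
    unfolding transfer_def F_def
    by (rule Bochner_Integration.integral_cong[OF refl]) (simp add: mult_ac flip: integral_mult_left_zero)
  moreover have "(\<integral>x. F x y \<partial>lborel) = z y * M y" for y
  proof -
    have "(\<integral>x. F x y \<partial>lborel) = dens z y * nu y"
      unfolding F_def nu_def sigma_sym[of y] by (rule integral_mult_right_zero)
    then show ?thesis using nu_mult_dens[of y z] by (simp add: mult.commute)
  qed
  ultimately show ?thesis by simp
qed

lemma L1M_nu: "L1M nu"
  using nu_bounds nu_pos by (intro L1M_if_bounded[where K=\<nu>2]) (auto simp: abs_of_pos)

lemma transfer_nu: "transfer nu v = nu v"
proof -
  have "nu v' \<noteq> 0" for v' using nu_pos[of v'] by linarith
  then show ?thesis unfolding transfer_def dens_def nu_def[of v] by simp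
qed

lemma transfer_add_scaled:
  assumes "L1M z1" "L1M z2"
  shows "transfer (\<lambda>v. z1 v + c * z2 v) v = transfer z1 v + c * transfer z2 v"
proof -
  have "dens (\<lambda>v. z1 v + c * z2 v) = (\<lambda>v. dens z1 v + c * dens z2 v)"
    unfolding dens_def by (simp add: fun_eq_iff distrib_left add_divide_distrib)
  moreover have "(\<lambda>v'. \<sigma> v' v * (dens z1 v' + c * dens z2 v'))
      = (\<lambda>v'. \<sigma> v' v * dens z1 v' + c * (\<sigma> v' v * dens z2 v'))"
    by (simp add: fun_eq_iff algebra_simps)
  ultimately have "transfer (\<lambda>v. z1 v + c * z2 v) v
      = (\<integral>v'. \<sigma> v' v * dens z1 v' + c * (\<sigma> v' v * dens z2 v') \<partial>lborel)"
    unfolding transfer_def by simp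
  also have "\<dots> = transfer z1 v + c * transfer z2 v"
    unfolding transfer_def
    using integrable_sigma_mult[OF integrable_dens[OF assms(1)]]
      integrable_sigma_mult[OF integrable_dens[OF assms(2)]]
    by (subst Bochner_Integration.integral_add) auto
  finally show ?thesis .
qed

section \<open>Doeblin contraction\<close>

text \<open>The kernel of \<open>transfer\<close> minus its Doeblin minorant \<open>(\<nu>1/\<nu>2) nu\<close>, which does not depend
  on the outgoing velocity \<open>x\<close>.\<close>

definition excess :: "real^'d \<Rightarrow> real^'d \<Rightarrow> real" where
  "excess x y = \<sigma> y x - \<nu>1 / \<nu>2 * nu y"

lemma excess_nonneg: "0 \<le> excess x y"
proof -
  have "\<nu>1 / \<nu>2 * nu y \<le> \<nu>1 / \<nu>2 * \<nu>2"
    using nu_bounds(2)[of y] nu1_pos nu2_pos by (intro mult_left_mono) auto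
  then show ?thesis unfolding excess_def using sigma_bounds[of y x] nu2_pos by simp
qed

lemma excess_le: "excess x y \<le> \<nu>2"
proof -
  have "0 \<le> \<nu>1 / \<nu>2 * nu y" using nu_pos[of y] nu1_pos nu2_pos by simp
  then show ?thesis unfolding excess_def using sigma_bounds[of y x] by linarith
qed

lemma excess_measurable[measurable (raw)]:
  assumes [measurable]: "f \<in> N \<rightarrow>\<^sub>M lborel" "g \<in> N \<rightarrow>\<^sub>M lborel"
  shows "(\<lambda>x. excess (f x) (g x)) \<in> borel_measurable N"
  unfolding excess_def by measurable

lemma integral_excess_mult_M: "(\<integral>x. excess x y * M x \<partial>lborel) = (1 - \<nu>1 / \<nu>2) * nu y"
proof -
  have "(\<integral>x. excess x y * M x \<partial>lborel) = (\<integral>x. \<sigma> x y * M x - \<nu>1 / \<nu>2 * nu y * M x \<partial>lborel)"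
    unfolding excess_def by (simp add: left_diff_distrib sigma_sym[of y])
  also have "\<dots> = nu y - \<nu>1 / \<nu>2 * nu y"
    using integrable_sigma_mult[OF M_int, of y] M_int M_int1
    by (subst Bochner_Integration.integral_diff) (auto simp: nu_def)
  finally show ?thesis by (simp add: algebra_simps)
qed

lemma transfer_eq_excess:
  assumes z: "L1M z" and mass: "(\<integral>v. z v * M v \<partial>lborel) = 0"
  shows "transfer z x = (\<integral>y. excess x y * dens z y \<partial>lborel)"
proof -
  have "(\<lambda>y. \<nu>1 / \<nu>2 * nu y * dens z y) = (\<lambda>y. \<nu>1 / \<nu>2 * (z y * M y))"
    using nu_mult_dens by (simp add: fun_eq_iff mult.assoc)
  moreover have "(\<integral>y. excess x y * dens z y \<partial>lborel)
      = (\<integral>y. \<sigma> y x * dens z y - \<nu>1 / \<nu>2 * nu y * dens z y \<partial>lborel)"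
    unfolding excess_def by (simp add: left_diff_distrib)
  ultimately show ?thesis
    unfolding transfer_def
    using integrable_sigma_mult[OF integrable_dens[OF z]] L1M_integrable[OF z] mass
    by (subst (asm) Bochner_Integration.integral_diff) auto
qed

lemma integrable_excess_abs_dens:
  assumes "L1M z"
  shows "integrable lborel (\<lambda>y. excess x y * \<bar>dens z y\<bar>)"
proof (rule integrable_abs_le[of _ "\<lambda>y. \<nu>2 * \<bar>dens z y\<bar>"])
  show "integrable lborel (\<lambda>y. \<nu>2 * \<bar>dens z y\<bar>)" using integrable_dens[OF assms] by simp
  show "(\<lambda>y. excess x y * \<bar>dens z y\<bar>) \<in> borel_measurable lborel"
    using L1M_measurable[OF assms] by measurable
  show "\<bar>excess x y * \<bar>dens z y\<bar>\<bar> \<le> \<nu>2 * \<bar>dens z y\<bar>" for y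
    using excess_nonneg[of x y] excess_le[of x y] by (simp add: abs_mult mult_right_mono)
qed

lemma abs_transfer_le_excess:
  assumes z: "L1M z" and mass: "(\<integral>v. z v * M v \<partial>lborel) = 0"
  shows "\<bar>transfer z x\<bar> \<le> (\<integral>y. excess x y * \<bar>dens z y\<bar> \<partial>lborel)"
proof -
  have [measurable]: "z \<in> borel_measurable lborel" using z by (rule L1M_measurable)
  have le: "\<bar>excess x y * dens z y\<bar> \<le> excess x y * \<bar>dens z y\<bar>" for y
    using excess_nonneg[of x y] by (simp add: abs_mult)
  moreover have "integrable lborel (\<lambda>y. excess x y * dens z y)"
    by (rule integrable_abs_le[OF integrable_excess_abs_dens[OF z] _ le]) measurable
  ultimately show ?thesis
    unfolding transfer_eq_excess[OF z mass]
    using integrable_excess_abs_dens[OF z] by (intro integral_abs_bound_integral) auto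
qed

lemma integral_excess_abs_dens:
  assumes z: "L1M z"
  shows "integrable lborel (\<lambda>x. (\<integral>y. excess x y * \<bar>dens z y\<bar> \<partial>lborel) * M x)"
    and "(\<integral>x. (\<integral>y. excess x y * \<bar>dens z y\<bar> \<partial>lborel) * M x \<partial>lborel)
           = (1 - \<nu>1 / \<nu>2) * (\<integral>v. \<bar>z v\<bar> * M v \<partial>lborel)"
proof -
  have [measurable]: "z \<in> borel_measurable lborel" using z by (rule L1M_measurable)
  define F where "F x y = \<bar>dens z y\<bar> * (excess x y * M x)" for x y
  have inner: "(\<integral>y. excess x y * \<bar>dens z y\<bar> \<partial>lborel) * M x = (\<integral>y. F x y \<partial>lborel)" for x
    unfolding F_def by (simp add: mult_ac flip: integral_mult_left_zero)
  have F_int: "integrable (lborel \<Otimes>\<^sub>M lborel) (case_prod F)"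
  proof (rule integrable_lborel_pair_abs_le)
    show "integrable lborel (\<lambda>x. \<nu>2 * M x)" using M_int by simp
    show "integrable lborel (\<lambda>y. \<bar>dens z y\<bar>)" using integrable_dens[OF z] by simp
    show "case_prod F \<in> borel_measurable (lborel \<Otimes>\<^sub>M lborel)" unfolding F_def by measurable
    show "\<bar>case_prod F (x, y)\<bar> \<le> \<nu>2 * M x * \<bar>dens z y\<bar>" for x y
    proof -
      have "\<bar>dens z y\<bar> * excess x y \<le> \<bar>dens z y\<bar> * \<nu>2"
        using excess_le[of x y] by (rule mult_left_mono) simp
      then show ?thesis
        unfolding F_def using excess_nonneg[of x y] M_pos[of x]
        by (simp add: abs_mult mult_ac mult_right_mono)
    qed
  qed
  show "integrable lborel (\<lambda>x. (\<integral>y. excess x y * \<bar>dens z y\<bar> \<partial>lborel) * M x)"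
    unfolding inner using lborel_pair.integrable_fst'[OF F_int] by simp
  have "(\<integral>x. F x y \<partial>lborel) = (1 - \<nu>1 / \<nu>2) * (\<bar>z y\<bar> * M y)" for y
  proof -
    have "\<bar>dens z y\<bar> * nu y = \<bar>nu y * dens z y\<bar>" using nu_pos[of y] by (simp add: abs_mult)
    then have "\<bar>dens z y\<bar> * nu y = \<bar>z y\<bar> * M y" by (simp add: nu_mult_dens abs_M)
    moreover have "(\<integral>x. F x y \<partial>lborel) = \<bar>dens z y\<bar> * ((1 - \<nu>1 / \<nu>2) * nu y)"
      unfolding F_def integral_excess_mult_M[symmetric] by (rule integral_mult_right_zero)
    ultimately show ?thesis by (metis mult.commute mult.left_commute)
  qed
  then show "(\<integral>x. (\<integral>y. excess x y * \<bar>dens z y\<bar> \<partial>lborel) * M x \<partial>lborel)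
      = (1 - \<nu>1 / \<nu>2) * (\<integral>v. \<bar>z v\<bar> * M v \<partial>lborel)"
    unfolding inner lborel_pair.Fubini_integral[OF F_int, symmetric] by simp
qed

lemma transfer_contraction:
  assumes z: "L1M z" and mass: "(\<integral>v. z v * M v \<partial>lborel) = 0"
  shows "(\<integral>v. \<bar>transfer z v\<bar> * M v \<partial>lborel) \<le> (1 - \<nu>1 / \<nu>2) * (\<integral>v. \<bar>z v\<bar> * M v \<partial>lborel)"
proof -
  have "(\<integral>v. \<bar>transfer z v\<bar> * M v \<partial>lborel)
      \<le> (\<integral>x. (\<integral>y. excess x y * \<bar>dens z y\<bar> \<partial>lborel) * M x \<partial>lborel)"
    using L1M_integrable_abs[OF L1M_transfer[OF z]] integral_excess_abs_dens(1)[OF z]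
      abs_transfer_le_excess[OF z mass] M_pos
    by (intro integral_mono) (auto intro: mult_right_mono less_imp_le)
  then show ?thesis unfolding integral_excess_abs_dens(2)[OF z] .
qed

section \<open>Neumann series\<close>

lemma transfer_iterates:
  assumes z: "L1M z" and mass: "(\<integral>v. z v * M v \<partial>lborel) = 0"
  shows "L1M ((transfer ^^ n) z)"
    and "(\<integral>v. (transfer ^^ n) z v * M v \<partial>lborel) = 0"
    and "(\<integral>v. \<bar>(transfer ^^ n) z v\<bar> * M v \<partial>lborel)
           \<le> (1 - \<nu>1 / \<nu>2) ^ n * (\<integral>v. \<bar>z v\<bar> * M v \<partial>lborel)"
proof -
  have "L1M ((transfer ^^ n) z) \<and> (\<integral>v. (transfer ^^ n) z v * M v \<partial>lborel) = 0
      \<and> (\<integral>v. \<bar>(transfer ^^ n) z v\<bar> * M v \<partial>lborel)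
           \<le> (1 - \<nu>1 / \<nu>2) ^ n * (\<integral>v. \<bar>z v\<bar> * M v \<partial>lborel)"
  proof (induction n)
    case 0
    then show ?case using z mass by simp
  next
    case (Suc n)
    let ?z = "(transfer ^^ n) z"
    have "0 \<le> 1 - \<nu>1 / \<nu>2" using nu1_le_nu2 nu2_pos by simp
    then have "(\<integral>v. \<bar>transfer ?z v\<bar> * M v \<partial>lborel) \<le> (1 - \<nu>1 / \<nu>2) * (\<integral>v. \<bar>?z v\<bar> * M v \<partial>lborel)
        \<and> (1 - \<nu>1 / \<nu>2) * (\<integral>v. \<bar>?z v\<bar> * M v \<partial>lborel)
          \<le> (1 - \<nu>1 / \<nu>2) * ((1 - \<nu>1 / \<nu>2) ^ n * (\<integral>v. \<bar>z v\<bar> * M v \<partial>lborel))"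
      using Suc.IH transfer_contraction by (auto intro: mult_left_mono)
    then show ?case
      using Suc.IH L1M_transfer integral_mult_M_transfer by auto
  qed
  then show "L1M ((transfer ^^ n) z)"
    and "(\<integral>v. (transfer ^^ n) z v * M v \<partial>lborel) = 0"
    and "(\<integral>v. \<bar>(transfer ^^ n) z v\<bar> * M v \<partial>lborel)
           \<le> (1 - \<nu>1 / \<nu>2) ^ n * (\<integral>v. \<bar>z v\<bar> * M v \<partial>lborel)"
    by auto
qed

lemma transfer_suminf:
  assumes z: "\<And>n. L1M (z n)"
    and pointwise: "\<And>v. summable (\<lambda>n. \<bar>z n v\<bar>)"
    and mean: "summable (\<lambda>n. \<integral>v. \<bar>z n v\<bar> * M v \<partial>lborel)"
  shows "transfer (\<lambda>v. \<Sum>n. z n v) v = (\<Sum>n. transfer (z n) v)"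
proof -
  define F where "F n v' = \<sigma> v' v * dens (z n) v'" for n v'
  have F_int: "integrable lborel (F n)" for n
    unfolding F_def by (rule integrable_sigma_mult[OF integrable_dens[OF z]])
  have F_bound: "\<bar>F n v'\<bar> \<le> \<nu>2 / \<nu>1 * (\<bar>z n v'\<bar> * M v')" for n v'
  proof -
    have "\<bar>F n v'\<bar> \<le> \<nu>2 * (\<bar>z n v'\<bar> * M v' / \<nu>1)"
      unfolding F_def abs_mult using abs_sigma_le abs_dens_le by (rule mult_mono) (use nu2_pos in auto)
    then show ?thesis by simp
  qed
  have "summable (\<lambda>n. norm (F n v'))" for v'
  proof (rule summable_comparison_test')
    show "summable (\<lambda>n. \<nu>2 / \<nu>1 * M v' * \<bar>z n v'\<bar>)" using pointwise by (intro summable_mult)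
    show "norm (norm (F n v')) \<le> \<nu>2 / \<nu>1 * M v' * \<bar>z n v'\<bar>" for n
      using F_bound[of n v'] by (simp add: mult_ac)
  qed
  moreover have "summable (\<lambda>n. \<integral>v'. norm (F n v') \<partial>lborel)"
  proof (rule summable_comparison_test')
    show "summable (\<lambda>n. \<nu>2 / \<nu>1 * (\<integral>v. \<bar>z n v\<bar> * M v \<partial>lborel))" using mean by (intro summable_mult)
    show "norm (\<integral>v'. norm (F n v') \<partial>lborel) \<le> \<nu>2 / \<nu>1 * (\<integral>v. \<bar>z n v\<bar> * M v \<partial>lborel)" for n
    proof -
      have "(\<integral>v'. norm (F n v') \<partial>lborel) \<le> (\<integral>v'. \<nu>2 / \<nu>1 * (\<bar>z n v'\<bar> * M v') \<partial>lborel)"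
        using F_int[of n] L1M_integrable_abs[OF z] F_bound by (intro integral_mono) auto
      then show ?thesis by (simp add: integral_nonneg_AE)
    qed
  qed
  moreover have "\<sigma> v' v * dens (\<lambda>v. \<Sum>n. z n v) v' = (\<Sum>n. F n v')" for v'
  proof -
    have sum: "summable (\<lambda>n. z n v')" using pointwise[of v'] by (rule summable_rabs_cancel)
    then have "summable (\<lambda>n. dens (z n) v')"
      unfolding dens_def by (intro summable_divide summable_mult)
    moreover have "dens (\<lambda>v. \<Sum>n. z n v) v' = (\<Sum>n. dens (z n) v')"
      unfolding dens_def using sum by (simp add: suminf_mult suminf_divide)
    ultimately show ?thesis unfolding F_def by (simp add: suminf_mult)
  qed
  ultimately show ?thesis
    unfolding transfer_def F_def[symmetric]
    using integral_suminf[OF F_int] by simp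
qed

lemma transfer_neumann_series:
  assumes q_meas: "q \<in> borel_measurable lborel" and q_bound: "\<And>v. \<bar>q v\<bar> \<le> K"
    and mass: "(\<integral>v. q v * M v \<partial>lborel) = 0"
  obtains w W where "L1M w" "\<And>v. \<bar>w v\<bar> \<le> W" "\<And>v. transfer w v = w v + q v"
proof -
  define r where "r = 1 - \<nu>1 / \<nu>2"
  have r: "0 \<le> r" "r < 1" unfolding r_def using nu1_pos nu2_pos nu1_le_nu2 by auto
  define e where "e n = (transfer ^^ n) (\<lambda>v. - q v)" for n
  have L1M_q: "L1M (\<lambda>v. - q v)"
    using q_bound by (intro L1M_if_bounded[where K=K]) (use q_meas in auto)
  define Q0 where "Q0 = (\<integral>v. \<bar>q v\<bar> * M v \<partial>lborel)"
  note iterates = transfer_iterates[OF L1M_q, folded e_def r_def, unfolded abs_minus_cancel, folded Q0_def]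
  have e_L1M: "L1M (e n)" for n using iterates mass by simp
  have e_mean: "(\<integral>v. \<bar>e n v\<bar> * M v \<partial>lborel) \<le> r ^ n * Q0" for n using iterates mass by simp
  have e_Suc_bound: "\<bar>e (Suc n) v\<bar> \<le> \<nu>2 / \<nu>1 * Q0 * r ^ n" for n v
  proof -
    have "\<bar>e (Suc n) v\<bar> \<le> \<nu>2 / \<nu>1 * (\<integral>v. \<bar>e n v\<bar> * M v \<partial>lborel)"
      unfolding e_def funpow.simps comp_def by (rule abs_transfer_le[OF e_L1M[unfolded e_def]])
    also have "\<dots> \<le> \<nu>2 / \<nu>1 * (r ^ n * Q0)"
      using e_mean nu1_pos nu2_pos by (intro mult_left_mono) auto
    finally show ?thesis by (simp add: mult_ac)
  qed
  have geometric: "summable (\<lambda>n. \<nu>2 / \<nu>1 * Q0 * r ^ n)"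
    using r by (intro summable_mult summable_geometric) simp
  have summable_Suc: "summable (\<lambda>n. \<bar>e (Suc n) v\<bar>)" for v
    by (rule summable_comparison_test'[OF geometric]) (use e_Suc_bound in simp)
  then have summable_e: "summable (\<lambda>n. \<bar>e n v\<bar>)" for v
    using summable_Suc_iff by blast
  define w where "w v = (\<Sum>n. e n v)" for v
  have w_split: "w v = - q v + (\<Sum>n. e (Suc n) v)" for v
    using suminf_split_head[OF summable_rabs_cancel[OF summable_e]] unfolding w_def e_def by simp
  have w_bound: "\<bar>w v\<bar> \<le> K + \<nu>2 / \<nu>1 * Q0 / (1 - r)" for v
  proof -
    have "\<bar>\<Sum>n. e (Suc n) v\<bar> \<le> (\<Sum>n. \<bar>e (Suc n) v\<bar>)" by (rule summable_rabs[OF summable_Suc])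
    also have "\<dots> \<le> (\<Sum>n. \<nu>2 / \<nu>1 * Q0 * r ^ n)"
      by (rule suminf_le[OF e_Suc_bound summable_Suc geometric])
    also have "\<dots> = \<nu>2 / \<nu>1 * Q0 * (\<Sum>n. r ^ n)"
      by (rule suminf_mult[OF summable_geometric]) (use r in simp)
    also have "\<dots> = \<nu>2 / \<nu>1 * Q0 / (1 - r)"
      using r suminf_geometric[of r] by simp
    finally show ?thesis unfolding w_split using q_bound[of v] by linarith
  qed
  have e_meas[measurable]: "e n \<in> borel_measurable lborel" for n using e_L1M by (rule L1M_measurable)
  have w_L1M: "L1M w"
    using w_bound by (intro L1M_if_bounded) (auto simp: w_def[abs_def])
  have "transfer w v = w v + q v" for v
  proof -
    have "summable (\<lambda>n. \<integral>v. \<bar>e n v\<bar> * M v \<partial>lborel)"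
    proof (rule summable_comparison_test')
      show "summable (\<lambda>n. Q0 * r ^ n)" using r by (intro summable_mult summable_geometric) simp
      show "norm (\<integral>v. \<bar>e n v\<bar> * M v \<partial>lborel) \<le> Q0 * r ^ n" for n
        using e_mean[of n] M_pos by (simp add: integral_nonneg_AE less_imp_le mult.commute)
    qed
    then have "transfer w v = (\<Sum>n. transfer (e n) v)"
      unfolding w_def[abs_def] using e_L1M summable_e by (rule transfer_suminf[rotated 2])
    also have "\<dots> = (\<Sum>n. e (Suc n) v)" unfolding e_def by simp
    finally show ?thesis using w_split[of v] by simp
  qed
  with w_L1M w_bound show ?thesis by (rule that)
qed

section \<open>The linear Boltzmann operator\<close>

lemma Qop_eq:
  assumes "integrable lborel f"
  shows "Qop \<sigma> M f v = M v * (\<integral>v'. \<sigma> v' v * f v' \<partial>lborel) - f v * nu v"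
proof -
  have "Qop \<sigma> M f v = (\<integral>v'. M v * (\<sigma> v' v * f v') - f v * (\<sigma> v' v * M v') \<partial>lborel)"
    unfolding Qop_def by (simp add: sigma_sym[of v] algebra_simps)
  also have "\<dots> = M v * (\<integral>v'. \<sigma> v' v * f v' \<partial>lborel) - f v * nu v"
    using integrable_sigma_mult[OF assms] integrable_sigma_mult[OF M_int]
    unfolding nu_def by (subst Bochner_Integration.integral_diff) auto
  finally show ?thesis .
qed

lemma Qop_add_scaled_M:
  assumes "integrable lborel f"
  shows "Qop \<sigma> M (\<lambda>v. f v + c * M v) v = Qop \<sigma> M f v"
proof -
  have "integrable lborel (\<lambda>v. f v + c * M v)" using assms M_int by simp
  moreover have "(\<integral>v'. \<sigma> v' v * (f v' + c * M v') \<partial>lborel)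
      = (\<integral>v'. \<sigma> v' v * f v' \<partial>lborel) + c * nu v"
    using integrable_sigma_mult[OF assms] integrable_sigma_mult[OF M_int]
    unfolding nu_def by (simp add: distrib_left mult.left_commute)
  ultimately show ?thesis using assms by (simp add: Qop_eq algebra_simps)
qed

lemma Qop_dens:
  assumes "L1M z"
  shows "Qop \<sigma> M (dens z) v = M v * (transfer z v - z v)"
  unfolding Qop_eq[OF integrable_dens[OF assms]] transfer_def[symmetric]
  using nu_mult_dens[of v z] by (simp add: algebra_simps)

lemma Qop_diff:
  assumes "integrable lborel f" "integrable lborel g"
  shows "Qop \<sigma> M (\<lambda>v. f v - g v) v = Qop \<sigma> M f v - Qop \<sigma> M g v"
  using assms integrable_sigma_mult[OF assms(1)] integrable_sigma_mult[OF assms(2)]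
  by (simp add: Qop_eq algebra_simps)

section \<open>Regularity of solutions\<close>

lemma abs_gradM_inner_le: "\<bar>gradM v \<bullet> e\<bar> \<le> C * M v * norm e"
proof -
  have "\<bar>gradM v \<bullet> e\<bar> \<le> norm (gradM v) * norm e" by (rule Cauchy_Schwarz_ineq2)
  also have "\<dots> \<le> C * M v * norm e"
    using M_grad_bound[of v] divide_one_plus_norm_le[of "C * M v" v] C_nonneg M_pos[of v]
    by (intro mult_right_mono) auto
  finally show ?thesis .
qed

definition M_dominated :: "real \<Rightarrow> (real^'d \<Rightarrow> real) \<Rightarrow> bool" where
  "M_dominated K f \<longleftrightarrow> (\<forall>v. \<bar>f v\<bar> \<le> K * M v \<and>
     (\<forall>i. \<exists>p. ((\<lambda>t. f (v + t *\<^sub>R axis i 1)) has_real_derivative p) (at 0) \<and> \<bar>p\<bar> \<le> K * M v))"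

lemma M_dominated_nonneg: "M_dominated K f \<Longrightarrow> 0 \<le> K"
  unfolding M_dominated_def using M_pos[of 0]
  by (metis abs_ge_zero order_trans zero_le_mult_iff not_less)

lemma M_dominated_mono: "M_dominated K f \<Longrightarrow> K \<le> K' \<Longrightarrow> M_dominated K' f"
  unfolding M_dominated_def using M_pos
  by (meson less_imp_le mult_right_mono order_trans)

lemma M_dominated_add_scaled_M:
  assumes f: "M_dominated K f"
  shows "M_dominated (K + \<bar>c\<bar> * (1 + C)) (\<lambda>v. f v + c * M v)"
  unfolding M_dominated_def
proof (intro allI conjI)
  fix v i
  have "\<bar>c\<bar> * 1 \<le> \<bar>c\<bar> * (1 + C)" "\<bar>c\<bar> * C \<le> \<bar>c\<bar> * (1 + C)"
    using C_nonneg by (intro mult_left_mono; simp)+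
  then have cM: "\<bar>c * M v\<bar> \<le> \<bar>c\<bar> * (1 + C) * M v" and cM': "\<bar>c\<bar> * C * M v \<le> \<bar>c\<bar> * (1 + C) * M v"
    unfolding abs_M using M_pos[of v] by (simp_all add: mult_right_mono)
  show "\<bar>f v + c * M v\<bar> \<le> (K + \<bar>c\<bar> * (1 + C)) * M v"
    using f abs_triangle_ineq[of "f v" "c * M v"] cM unfolding M_dominated_def
    by (simp add: distrib_right) (smt (verit))
  obtain p where p: "((\<lambda>t. f (v + t *\<^sub>R axis i 1)) has_real_derivative p) (at 0)" "\<bar>p\<bar> \<le> K * M v"
    using f unfolding M_dominated_def by blast
  have "((\<lambda>t. M (v + t *\<^sub>R axis i 1)) has_real_derivative gradM v \<bullet> axis i 1) (at 0)"
    by (rule has_real_derivative_along_line[OF M_grad])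
  from DERIV_add[OF p(1) DERIV_cmult[OF this, of c]]
  have "((\<lambda>t. f (v + t *\<^sub>R axis i 1) + c * M (v + t *\<^sub>R axis i 1))
      has_real_derivative p + c * (gradM v \<bullet> axis i 1)) (at 0)" .
  moreover have "\<bar>c * (gradM v \<bullet> axis i 1)\<bar> \<le> \<bar>c\<bar> * C * M v"
    using abs_gradM_inner_le[of v "axis i 1"] by (simp add: abs_mult mult.assoc mult_left_mono)
  then have "\<bar>p + c * (gradM v \<bullet> axis i 1)\<bar> \<le> (K + \<bar>c\<bar> * (1 + C)) * M v"
    using p(2) cM' abs_triangle_ineq[of p "c * (gradM v \<bullet> axis i 1)"]
    by (simp add: distrib_right)
  ultimately show "\<exists>p. ((\<lambda>t. f (v + t *\<^sub>R axis i 1) + c * M (v + t *\<^sub>R axis i 1))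
      has_real_derivative p) (at 0) \<and> \<bar>p\<bar> \<le> (K + \<bar>c\<bar> * (1 + C)) * M v"
    by blast
qed

lemma dens_fixed_point_partial_derivatives:
  assumes w: "L1M w" and fixed_point: "\<And>v. transfer w v = w v + h v / M v"
    and h: "M_dominated Ch h"
  obtains K where "\<And>v i. \<exists>p. ((\<lambda>t. dens w (v + t *\<^sub>R axis i 1)) has_real_derivative p) (at 0)
    \<and> \<bar>p\<bar> \<le> K * M v"
proof -
  define Tb where "Tb = \<nu>2 / \<nu>1 * (\<integral>v. \<bar>w v\<bar> * M v \<partial>lborel)"
  define Cb where "Cb = C * (\<integral>v'. \<bar>dens w v'\<bar> \<partial>lborel)"
  have Tb: "\<bar>transfer w v\<bar> \<le> Tb" for v unfolding Tb_def by (rule abs_transfer_le[OF w])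
  have Tb_nonneg: "0 \<le> Tb" using Tb[of 0] by linarith
  have h_bound: "\<bar>h v\<bar> \<le> Ch * M v" for v using h unfolding M_dominated_def by blast
  \<comment> \<open>the fixed-point equation expresses \<open>dens w\<close> through the differentiable functions \<open>M\<close>,
    \<open>transfer w\<close>, \<open>h\<close> and \<open>nu\<close>\<close>
  have dens_eq: "dens w u = (M u * transfer w u - h u) / nu u" for u
    unfolding dens_def fixed_point using M_pos[of u] by (simp add: algebra_simps)
  have "\<exists>p. ((\<lambda>t. dens w (v + t *\<^sub>R axis i 1)) has_real_derivative p) (at 0)
      \<and> \<bar>p\<bar> \<le> ((C * Tb + Cb + Ch) / \<nu>1 + (Tb + Ch) * C / (\<nu>1 * \<nu>1)) * M v" for v i
  proof -
    define e :: "real^'d" where "e = axis i 1"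
    obtain dh where dh: "((\<lambda>t. h (v + t *\<^sub>R e)) has_real_derivative dh) (at 0)" "\<bar>dh\<bar> \<le> Ch * M v"
      using h unfolding M_dominated_def e_def by blast
    define dM where "dM = gradM v \<bullet> e"
    define dT where "dT = (\<integral>v'. D\<sigma> v' v e * dens w v' \<partial>lborel)"
    define dn where "dn = (\<integral>v'. D\<sigma> v' v e * M v' \<partial>lborel)"
    have M_line: "((\<lambda>t. M (v + t *\<^sub>R e)) has_real_derivative dM) (at 0)"
      unfolding dM_def by (rule has_real_derivative_along_line[OF M_grad])
    have T_line: "((\<lambda>t. transfer w (v + t *\<^sub>R e)) has_real_derivative dT) (at 0)"
      unfolding transfer_def dT_def
      by (rule directional_derivative_sigma_integral(1)[OF integrable_dens[OF w]])
    have nu_line: "((\<lambda>t. nu (v + t *\<^sub>R e)) has_real_derivative dn) (at 0)"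
      unfolding nu_def dn_def by (rule directional_derivative_sigma_integral(1)[OF M_int])
    have dM_bound: "\<bar>dM\<bar> \<le> C * M v" using abs_gradM_inner_le[of v e] by (simp add: dM_def e_def)
    have dT_bound: "\<bar>dT\<bar> \<le> Cb"
      using directional_derivative_sigma_integral(2)[OF integrable_dens[OF w], of v e]
      by (simp add: dT_def Cb_def e_def)
    have dn_bound: "\<bar>dn\<bar> \<le> C"
      using directional_derivative_sigma_integral(2)[OF M_int, of v e] M_pos
      by (simp add: dn_def e_def abs_of_pos M_int1)
    let ?a = "M v * transfer w v - h v" and ?da = "dM * transfer w v + M v * dT - dh"
    have a_line: "((\<lambda>t. M (v + t *\<^sub>R e) * transfer w (v + t *\<^sub>R e) - h (v + t *\<^sub>R e))
        has_real_derivative ?da) (at 0)"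
      using DERIV_diff[OF DERIV_mult[OF M_line T_line] dh(1)] by (simp add: mult.commute)
    have "nu (v + 0 *\<^sub>R e) \<noteq> 0" using nu_pos[of v] by simp
    from DERIV_divide[OF a_line nu_line this]
    have "((\<lambda>t. dens w (v + t *\<^sub>R e)) has_real_derivative (?da * nu v - ?a * dn) / (nu v * nu v)) (at 0)"
      unfolding dens_eq by simp
    moreover have "\<bar>(?da * nu v - ?a * dn) / (nu v * nu v)\<bar>
        \<le> M v * ((C * Tb + Cb + Ch) / \<nu>1 + (Tb + Ch) * C / (\<nu>1 * \<nu>1))"
    proof (rule quotient_derivative_bound[OF nu1_pos nu_bounds(1) _ _ dn_bound])
      have "\<bar>M v * transfer w v\<bar> \<le> Tb * M v"
        using Tb[of v] M_pos[of v] by (simp add: abs_mult mult.commute mult_left_mono)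
      then show "\<bar>?a\<bar> \<le> (Tb + Ch) * M v" using h_bound[of v] by (simp add: algebra_simps)
      have "\<bar>dM * transfer w v\<bar> \<le> C * M v * Tb"
        unfolding abs_mult using dM_bound Tb Tb_nonneg by (intro mult_mono) auto
      moreover have "\<bar>M v * dT\<bar> \<le> M v * Cb"
        unfolding abs_mult using dT_bound M_pos[of v] by (simp add: mult_left_mono)
      ultimately show "\<bar>?da\<bar> \<le> (C * Tb + Cb + Ch) * M v"
        using dh(2) by (simp add: algebra_simps)
    qed
    ultimately show ?thesis unfolding e_def by (auto simp: mult.commute)
  qed
  then show ?thesis by (rule that)
qed

lemma M_dominated_dens_fixed_point:
  assumes w: "L1M w" and w_bound: "\<And>v. \<bar>w v\<bar> \<le> W"
    and fixed_point: "\<And>v. transfer w v = w v + h v / M v"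
    and h: "M_dominated Ch h"
  shows "\<exists>K. M_dominated K (dens w)"
proof -
  obtain K where K: "\<And>v i. \<exists>p. ((\<lambda>t. dens w (v + t *\<^sub>R axis i 1)) has_real_derivative p) (at 0)
      \<and> \<bar>p\<bar> \<le> K * M v"
    using dens_fixed_point_partial_derivatives[OF w fixed_point h] by blast
  have "0 \<le> K * M 0" using K[of 0 undefined] abs_ge_zero order_trans by blast
  then have "0 \<le> K" using M_pos[of 0] by (simp add: zero_le_mult_iff)
  moreover have "\<bar>dens w v\<bar> \<le> W / \<nu>1 * M v" for v
    using abs_dens_le[of w v] w_bound[of v] M_pos[of v] nu1_pos
    by (smt (verit) divide_right_mono mult_right_mono times_divide_eq_left)
  moreover have "0 \<le> W / \<nu>1" using w_bound[of 0] nu1_pos by simp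
  ultimately have "M_dominated (W / \<nu>1 + K) (dens w)"
    unfolding M_dominated_def using K M_pos
    by (smt (verit, best) mult_right_mono)
  then show ?thesis ..
qed

section \<open>Existence\<close>

lemma exists_solution:
  assumes h_meas: "h \<in> borel_measurable lborel" and h: "M_dominated Ch h"
    and h_mass: "(\<integral>v. h v \<partial>lborel) = 0"
  obtains f K where "integrable lborel f" "(\<integral>v. f v \<partial>lborel) = 0"
    "\<And>v. Qop \<sigma> M f v = h v" "M_dominated K f"
proof -
  define q where "q v = h v / M v" for v
  have q_M: "q v * M v = h v" for v unfolding q_def using M_pos[of v] by simp
  have "\<bar>q v\<bar> \<le> Ch" for v
    using h M_pos[of v] unfolding q_def M_dominated_def by (simp add: divide_le_eq)
  moreover have "(\<integral>v. q v * M v \<partial>lborel) = 0" unfolding q_M by (rule h_mass)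
  moreover have "q \<in> borel_measurable lborel" unfolding q_def[abs_def] using h_meas by measurable
  ultimately obtain w W where w: "L1M w" "\<And>v. \<bar>w v\<bar> \<le> W" "\<And>v. transfer w v = w v + q v"
    using transfer_neumann_series by blast
  define c where "c = - (\<integral>v. dens w v \<partial>lborel)"
  define f where "f v = dens w v + c * M v" for v
  have f_int: "integrable lborel f" unfolding f_def[abs_def] using integrable_dens[OF w(1)] M_int by simp
  have f_mass: "(\<integral>v. f v \<partial>lborel) = 0"
    unfolding f_def using integrable_dens[OF w(1)] M_int M_int1 by (simp add: c_def)
  have Q_f: "Qop \<sigma> M f v = h v" for v
    unfolding f_def Qop_add_scaled_M[OF integrable_dens[OF w(1)]] Qop_dens[OF w(1)] w(3)
    using q_M[of v] by (simp add: mult.commute)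
  have "transfer w v = w v + h v / M v" for v using w(3) by (simp add: q_def)
  from M_dominated_dens_fixed_point[OF w(1,2) this h] obtain K where "M_dominated K (dens w)" ..
  then have "M_dominated (K + \<bar>c\<bar> * (1 + C)) f"
    unfolding f_def by (rule M_dominated_add_scaled_M)
  with f_int f_mass Q_f show ?thesis by (rule that)
qed

section \<open>Uniqueness\<close>

lemma transfer_fixed_point_mass_zero:
  assumes y: "L1M y" and mass: "(\<integral>v. y v * M v \<partial>lborel) = 0"
    and fixed: "AE v in lborel. transfer y v = y v"
  shows "AE v in lborel. y v = 0"
proof -
  have [measurable]: "y \<in> borel_measurable lborel" using y by (rule L1M_measurable)
  have "(\<integral>v. \<bar>y v\<bar> * M v \<partial>lborel) = (\<integral>v. \<bar>transfer y v\<bar> * M v \<partial>lborel)"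
    using fixed by (intro integral_cong_AE) (auto elim!: eventually_mono)
  also have "\<dots> \<le> (1 - \<nu>1 / \<nu>2) * (\<integral>v. \<bar>y v\<bar> * M v \<partial>lborel)"
    by (rule transfer_contraction[OF y mass])
  finally have "\<nu>1 / \<nu>2 * (\<integral>v. \<bar>y v\<bar> * M v \<partial>lborel) \<le> \<nu>1 / \<nu>2 * 0"
    by (simp add: algebra_simps)
  moreover have "0 < \<nu>1 / \<nu>2" using nu1_pos nu2_pos by simp
  ultimately have "(\<integral>v. \<bar>y v\<bar> * M v \<partial>lborel) \<le> 0"
    using mult_le_cancel_left_pos by blast
  moreover have "0 \<le> (\<integral>v. \<bar>y v\<bar> * M v \<partial>lborel)"
    using M_pos by (intro integral_nonneg_AE AE_I2) (simp add: less_imp_le)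
  ultimately have "(\<integral>v. \<bar>y v\<bar> * M v \<partial>lborel) = 0" by linarith
  then have "AE v in lborel. \<bar>y v\<bar> * M v = 0"
    using integral_nonneg_eq_0_iff_AE[OF L1M_integrable_abs[OF y]] M_pos by (simp add: less_imp_le)
  then show ?thesis using M_pos by (auto elim!: eventually_mono simp: less_imp_neq[symmetric])
qed

lemma transfer_fixed_point:
  assumes z: "L1M z" and fixed: "AE v in lborel. transfer z v = z v"
  shows "AE v in lborel. z v = (\<integral>v. z v * M v \<partial>lborel) / (\<integral>v. nu v * M v \<partial>lborel) * nu v"
proof -
  define cc where "cc = (\<integral>v. z v * M v \<partial>lborel) / (\<integral>v. nu v * M v \<partial>lborel)"
  define y where "y v = z v + (- cc) * nu v" for v
  have "(\<integral>v. \<nu>1 * M v \<partial>lborel) \<le> (\<integral>v. nu v * M v \<partial>lborel)"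
    using M_int L1M_integrable[OF L1M_nu] nu_bounds M_pos
    by (intro integral_mono) (auto intro: mult_right_mono less_imp_le)
  then have "0 < (\<integral>v. nu v * M v \<partial>lborel)" using M_int1 nu1_pos by simp
  moreover have "(\<integral>v. y v * M v \<partial>lborel)
      = (\<integral>v. z v * M v \<partial>lborel) - cc * (\<integral>v. nu v * M v \<partial>lborel)"
    unfolding y_def distrib_right
    using L1M_integrable[OF z] L1M_integrable[OF L1M_nu] by (simp add: mult.assoc)
  ultimately have "(\<integral>v. y v * M v \<partial>lborel) = 0" unfolding cc_def by simp
  moreover have "AE v in lborel. transfer y v = y v"
    using fixed
  proof (rule eventually_mono)
    fix v assume "transfer z v = z v"
    then show "transfer y v = y v"
      unfolding y_def transfer_add_scaled[OF z L1M_nu] transfer_nu by simp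
  qed
  ultimately have "AE v in lborel. y v = 0"
    using transfer_fixed_point_mass_zero[OF L1M_add_scaled[OF z L1M_nu]] unfolding y_def by blast
  then show ?thesis by (rule eventually_mono) (simp add: y_def cc_def)
qed

lemma Qop_kernel:
  assumes \<delta>: "integrable lborel \<delta>" and Q\<delta>: "AE v in lborel. Qop \<sigma> M \<delta> v = 0"
  shows "AE v in lborel. \<delta> v = (\<integral>v. \<delta> v \<partial>lborel) * M v"
proof -
  have [measurable]: "\<delta> \<in> borel_measurable lborel" using \<delta> by simp
  define z where "z v = nu v * \<delta> v / M v" for v
  have z_M: "z v * M v = nu v * \<delta> v" for v unfolding z_def using M_pos[of v] by simp
  have "integrable lborel (\<lambda>v. nu v * \<delta> v)"
  proof (rule integrable_abs_le[of _ "\<lambda>v. \<nu>2 * \<bar>\<delta> v\<bar>"])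
    show "integrable lborel (\<lambda>v. \<nu>2 * \<bar>\<delta> v\<bar>)" using \<delta> by simp
    show "\<bar>nu v * \<delta> v\<bar> \<le> \<nu>2 * \<bar>\<delta> v\<bar>" for v
      unfolding abs_mult using nu_bounds(2)[of v] nu_pos[of v] by (simp add: mult_right_mono)
  qed measurable
  then have z: "L1M z" unfolding L1M_def z_M by (simp add: z_def[abs_def])
  have dens_z: "dens z v = \<delta> v" for v
    unfolding dens_def z_def using M_pos[of v] nu_pos[of v] by simp
  have "AE v in lborel. transfer z v = z v"
    using Q\<delta>
  proof (rule eventually_mono)
    fix v assume "Qop \<sigma> M \<delta> v = 0"
    then have "M v * transfer z v = \<delta> v * nu v"
      unfolding Qop_eq[OF \<delta>] transfer_def dens_z by simp
    then show "transfer z v = z v" unfolding z_def using M_pos[of v] by (simp add: field_simps)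
  qed
  from transfer_fixed_point[OF z this] obtain cc where "AE v in lborel. z v = cc * nu v" by blast
  then have \<delta>_eq: "AE v in lborel. \<delta> v = cc * M v"
  proof (rule eventually_mono)
    fix v assume "z v = cc * nu v"
    then have "nu v * \<delta> v = nu v * (cc * M v)"
      using z_M[of v] by (auto simp: mult.commute mult.left_commute)
    then show "\<delta> v = cc * M v" using nu_pos[of v] by simp
  qed
  then have "(\<integral>v. \<delta> v \<partial>lborel) = (\<integral>v. cc * M v \<partial>lborel)"
    by (intro integral_cong_AE) auto
  then show ?thesis using \<delta>_eq M_int1 by simp
qed

lemma Qop_unique:
  assumes f: "integrable lborel f" and g: "integrable lborel g"
    and Q: "AE v in lborel. Qop \<sigma> M f v = Qop \<sigma> M g v"
    and mass: "(\<integral>v. f v \<partial>lborel) = (\<integral>v. g v \<partial>lborel)"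
  shows "AE v in lborel. f v = g v"
proof -
  have "AE v in lborel. Qop \<sigma> M (\<lambda>v. f v - g v) v = 0"
    using Q by (rule eventually_mono) (simp add: Qop_diff[OF f g])
  from Qop_kernel[OF _ this] show ?thesis using f g mass by auto
qed

section \<open>Vector-valued right-hand sides\<close>

lemma L2w_integrable:
  assumes "L2w M g"
  shows "integrable lborel g"
proof (rule integrable_abs_le[OF _ _ abs_le_square_div_add[OF M_pos]])
  show "integrable lborel (\<lambda>v. (g v)\<^sup>2 / M v + M v)" using assms M_int unfolding L2w_def by simp
  show "g \<in> borel_measurable lborel" using assms unfolding L2w_def by simp
qed

lemma L2w_if_abs_le_M:
  assumes [measurable]: "f \<in> borel_measurable lborel" and f: "\<And>v. \<bar>f v\<bar> \<le> K * M v"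
  shows "L2w M f"
  unfolding L2w_def
proof (intro conjI integrable_abs_le_M[where K="K\<^sup>2"])
  show "\<bar>(f v)\<^sup>2 / M v\<bar> \<le> K\<^sup>2 * M v" for v
  proof -
    have "(f v)\<^sup>2 \<le> (K * M v)\<^sup>2" using f[of v] by (simp add: abs_le_square_iff[symmetric])
    then have "(f v)\<^sup>2 / M v \<le> (K * M v)\<^sup>2 / M v" using M_pos[of v] by (simp add: divide_right_mono)
    then show ?thesis using M_pos[of v] by (simp add: power2_eq_square)
  qed
qed measurable

lemma vector_solution_unique:
  fixes lam \<mu> :: "real^'d \<Rightarrow> real^'n::finite"
  assumes lam_int: "integrable lborel lam"
    and lam_Q: "\<And>j v. Qop \<sigma> M (\<lambda>u. lam u $ j) v = G v $ j"
    and \<mu>_L2w: "\<forall>j. L2w M (\<lambda>v. \<mu> v $ j)"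
    and \<mu>_Q: "AE v in lborel. \<forall>j. Qop \<sigma> M (\<lambda>u. \<mu> u $ j) v = G v $ j"
    and mass: "(\<integral>v. \<mu> v \<partial>lborel) = (\<integral>v. lam v \<partial>lborel)"
  shows "AE v in lborel. \<mu> v = lam v"
proof -
  have \<mu>_int: "integrable lborel \<mu>"
    using \<mu>_L2w L2w_integrable by (intro integrable_cart_componentwise) blast
  have "AE v in lborel. \<mu> v $ j = lam v $ j" for j
  proof (rule Qop_unique)
    show "integrable lborel (\<lambda>v. \<mu> v $ j)" using \<mu>_L2w L2w_integrable by blast
    show "integrable lborel (\<lambda>v. lam v $ j)"
      by (rule integrable_bounded_linear[OF bounded_linear_vec_nth lam_int])
    show "AE v in lborel. Qop \<sigma> M (\<lambda>v. \<mu> v $ j) v = Qop \<sigma> M (\<lambda>v. lam v $ j) v"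
      using \<mu>_Q by (rule eventually_mono) (simp add: lam_Q)
    show "(\<integral>v. \<mu> v $ j \<partial>lborel) = (\<integral>v. lam v $ j \<partial>lborel)"
      using integral_vec_nth[OF \<mu>_int, of j] integral_vec_nth[OF lam_int, of j] mass by simp
  qed
  then have "AE v in lborel. \<forall>j\<in>UNIV. \<mu> v $ j = lam v $ j" by (intro AE_finite_allI) auto
  then show ?thesis by (rule eventually_mono) (simp add: vec_eq_iff)
qed

lemma exists_unique_vector_solution:
  fixes G :: "real^'d \<Rightarrow> real^'n::finite"
  assumes G_meas: "\<And>j. (\<lambda>v. G v $ j) \<in> borel_measurable lborel"
    and G_dominated: "\<And>j. M_dominated K (\<lambda>v. G v $ j)"
    and G_mass: "\<And>j. (\<integral>v. G v $ j \<partial>lborel) = 0"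
  shows "\<exists>lam :: real^'d \<Rightarrow> real^'n.
           (\<forall>j. L2w M (\<lambda>v. lam v $ j))
         \<and> (AE v in lborel. \<forall>j. Qop \<sigma> M (\<lambda>u. lam u $ j) v = G v $ j)
         \<and> (\<integral>v. lam v \<partial>lborel) = 0
         \<and> (\<forall>\<mu> :: real^'d \<Rightarrow> real^'n.
               (\<forall>j. L2w M (\<lambda>v. \<mu> v $ j))
             \<and> (AE v in lborel. \<forall>j. Qop \<sigma> M (\<lambda>u. \<mu> u $ j) v = G v $ j)
             \<and> (\<integral>v. \<mu> v \<partial>lborel) = 0
             \<longrightarrow> (AE v in lborel. \<mu> v = lam v))
         \<and> (\<exists>C'. \<forall>v. norm (lam v) \<le> C' * M v
                 \<and> (\<forall>i j. \<exists>p. ((\<lambda>t. lam (v + t *\<^sub>R axis i 1) $ j) has_real_derivative p) (at 0)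
                             \<and> \<bar>p\<bar> \<le> C' * M v))"
proof -
  have "\<exists>f K. integrable lborel f \<and> (\<integral>v. f v \<partial>lborel) = 0
      \<and> (\<forall>v. Qop \<sigma> M f v = G v $ j) \<and> M_dominated K f" for j
    using exists_solution[OF G_meas G_dominated G_mass] by metis
  then obtain F KF where F_int: "\<And>j. integrable lborel (F j)"
    and F_mass: "\<And>j. (\<integral>v. F j v \<partial>lborel) = 0"
    and F_Q: "\<And>j v. Qop \<sigma> M (F j) v = G v $ j"
    and F_dominated: "\<And>j. M_dominated (KF j) (F j)"
    by metis
  define lam :: "real^'d \<Rightarrow> real^'n" where "lam v = (\<chi> j. F j v)" for v
  have lam_nth: "(\<lambda>v. lam v $ j) = F j" for j unfolding lam_def by simp
  define C' where "C' = (\<Sum>j\<in>UNIV. KF j)"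
  have KF_le: "KF j \<le> C'" for j
    unfolding C'_def using M_dominated_nonneg[OF F_dominated] by (intro member_le_sum) auto
  have F_L2w: "L2w M (F j)" for j
    using F_dominated[of j] F_int[of j] unfolding M_dominated_def
    by (intro L2w_if_abs_le_M[where K="KF j"]) auto
  have lam_int: "integrable lborel lam"
    by (rule integrable_cart_componentwise) (simp add: lam_nth F_int)
  have lam_mass: "(\<integral>v. lam v \<partial>lborel) = 0"
    using integral_vec_nth[OF lam_int] by (simp add: vec_eq_iff lam_nth F_mass)
  have lam_Q: "Qop \<sigma> M (\<lambda>u. lam u $ j) v = G v $ j" for j v by (simp add: lam_nth F_Q)
  have bounds: "norm (lam v) \<le> C' * M v
      \<and> (\<forall>i j. \<exists>p. ((\<lambda>t. lam (v + t *\<^sub>R axis i 1) $ j) has_real_derivative p) (at 0)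
                \<and> \<bar>p\<bar> \<le> C' * M v)" for v
  proof
    have "norm (lam v) \<le> (\<Sum>j\<in>UNIV. \<bar>lam v $ j\<bar>)" by (rule norm_le_l1_cart)
    also have "\<dots> \<le> (\<Sum>j\<in>UNIV. KF j * M v)"
      using F_dominated unfolding M_dominated_def lam_def by (intro sum_mono) simp
    finally show "norm (lam v) \<le> C' * M v" unfolding C'_def by (simp add: sum_distrib_right)
    show "\<forall>i j. \<exists>p. ((\<lambda>t. lam (v + t *\<^sub>R axis i 1) $ j) has_real_derivative p) (at 0)
        \<and> \<bar>p\<bar> \<le> C' * M v"
      using M_dominated_mono[OF F_dominated KF_le] unfolding M_dominated_def lam_def by simp
  qed
  show ?thesis
    using lam_nth F_L2w lam_Q lam_mass bounds vector_solution_unique[OF lam_int lam_Q]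
    by (intro exI[of _ lam] conjI allI impI) auto
qed

lemma gradM_odd: "gradM (- v) = - gradM v"
proof -
  have "((M \<circ> uminus) has_derivative (\<lambda>h. gradM (- v) \<bullet> h) \<circ> uminus) (at v)"
    using M_grad[of "- v"] by (intro diff_chain_at) (auto intro!: derivative_eq_intros)
  moreover have "M \<circ> uminus = M" using M_even by (simp add: fun_eq_iff)
  ultimately have "(M has_derivative (\<lambda>h. - gradM (- v) \<bullet> h)) (at v)" by (simp add: comp_def)
  from has_derivative_unique[OF M_grad[of v] this]
  have "(gradM v + gradM (- v)) \<bullet> h = 0" for h by (simp add: inner_add_left fun_eq_iff)
  from this[of "gradM v + gradM (- v)"] show ?thesis
    by (simp add: eq_neg_iff_add_eq_0 add.commute)
qed

lemma integral_gradM_component: "(\<integral>v. gradM v $ j \<partial>lborel) = 0"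
proof -
  have "(\<lambda>v. gradM v $ j) \<in> borel_measurable borel"
    by (rule borel_measurable_continuous_onI[OF continuous_on_component[OF continuous_on_gradM]])
  then have "(\<integral>v. gradM v $ j \<partial>lborel) = (\<integral>v. gradM (- v) $ j \<partial>lborel)"
    by (rule lborel_integral_reflect_cart[symmetric])
  then show ?thesis by (simp add: gradM_odd)
qed

lemma gradM_component_measurable: "(\<lambda>v. gradM v $ j) \<in> borel_measurable lborel"
  using borel_measurable_continuous_onI[OF continuous_on_component[OF continuous_on_gradM]]
  by simp

lemma M_dominated_gradM_component: "M_dominated C (\<lambda>v. gradM v $ j)"
  unfolding M_dominated_def
proof (intro allI conjI)
  fix v i
  have "\<bar>gradM v $ j\<bar> \<le> norm (gradM v)" by (rule component_le_norm_cart)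
  also have "\<dots> \<le> C * M v"
    using M_grad_bound[of v] divide_one_plus_norm_le[of "C * M v" v] C_nonneg M_pos[of v] by simp
  finally show "\<bar>gradM v $ j\<bar> \<le> C * M v" .
  have lin: "bounded_linear (DgradM v)" using M_hess has_derivative_bounded_linear by blast
  have "((\<lambda>u. gradM u $ j) has_derivative (\<lambda>h. DgradM v h $ j)) (at v)"
    by (rule bounded_linear.has_derivative[OF bounded_linear_vec_nth M_hess])
  then have "((\<lambda>t. gradM (v + t *\<^sub>R axis i 1) $ j) has_real_derivative DgradM v (axis i 1) $ j) (at 0)"
    by (rule has_real_derivative_along_line)
  moreover have "\<bar>DgradM v (axis i 1) $ j\<bar> \<le> C * M v"
  proof -
    have "\<bar>DgradM v (axis i 1) $ j\<bar> \<le> norm (DgradM v (axis i 1))" by (rule component_le_norm_cart)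
    also have "\<dots> \<le> onorm (DgradM v) * norm (axis i (1::real))" by (rule onorm[OF lin])
    also have "\<dots> \<le> C * M v" using M_hess_bound[of v] by simp
    finally show ?thesis .
  qed
  ultimately show "\<exists>p. ((\<lambda>t. gradM (v + t *\<^sub>R axis i 1) $ j) has_real_derivative p) (at 0)
      \<and> \<bar>p\<bar> \<le> C * M v" by blast
qed

end

theorem lemma2p11:
  fixes M :: "real^'d::finite \<Rightarrow> real"
    and gradM :: "real^'d \<Rightarrow> real^'d"
    and DgradM :: "real^'d \<Rightarrow> real^'d \<Rightarrow> real^'d"
    and \<sigma> :: "real^'d \<Rightarrow> real^'d \<Rightarrow> real"
    and D\<sigma> :: "real^'d \<Rightarrow> real^'d \<Rightarrow> real^'d \<Rightarrow> real"
    and \<alpha> \<gamma> \<nu>0 \<nu>1 \<nu>2 C :: real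
  assumes alpha: "1 \<le> \<alpha>" "\<alpha> < 2"
    and M_pos: "\<And>v. M v > 0"
    and M_even: "\<And>v. M (- v) = M v"
    and M_int: "integrable lborel M" "(\<integral>v. M v \<partial>lborel) = 1"
    and M_tail: "\<gamma> > 0" "((\<lambda>v. norm v powr (real CARD('d) + \<alpha>) * M v) \<longlongrightarrow> \<gamma>) at_infinity"
    and M_grad: "\<And>v. (M has_derivative (\<lambda>h. gradM v \<bullet> h)) (at v)"
    and M_grad_bound: "\<And>v. norm (gradM v) \<le> C * M v / (1 + norm v)"
    and M_hess: "\<And>v. (gradM has_derivative DgradM v) (at v)"
    and M_hess_bound: "\<And>v. onorm (DgradM v) \<le> C * M v"
    and sigma_sym: "\<And>v v'. \<sigma> v v' = \<sigma> v' v"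
    and nu12: "0 < \<nu>1" "\<nu>1 \<le> \<nu>2"
    and sigma_bounds: "\<And>v v'. \<nu>1 \<le> \<sigma> v v' \<and> \<sigma> v v' \<le> \<nu>2"
    and sigma_grad: "\<And>v' v. ((\<lambda>u. \<sigma> v' u) has_derivative D\<sigma> v' v) (at v)"
    and sigma_grad_bound: "\<And>v' v. onorm (D\<sigma> v' v) \<le> C / (1 + norm v)"
    and sigma_nu0: "\<And>v v'. \<bar>\<sigma> v v' - \<nu>0\<bar> \<le> C / (1 + norm v)"
    and nu_even: "\<And>v. (\<integral>v'. \<sigma> v' (- v) * M v' \<partial>lborel) = (\<integral>v'. \<sigma> v' v * M v' \<partial>lborel)"
  shows "\<exists>lam :: real^'d \<Rightarrow> real^'d.
           (\<forall>j. L2w M (\<lambda>v. lam v $ j))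
         \<and> (AE v in lborel. \<forall>j. Qop \<sigma> M (\<lambda>u. lam u $ j) v = gradM v $ j)
         \<and> (\<integral>v. lam v \<partial>lborel) = 0
         \<and> (\<forall>\<mu> :: real^'d \<Rightarrow> real^'d.
               (\<forall>j. L2w M (\<lambda>v. \<mu> v $ j))
             \<and> (AE v in lborel. \<forall>j. Qop \<sigma> M (\<lambda>u. \<mu> u $ j) v = gradM v $ j)
             \<and> (\<integral>v. \<mu> v \<partial>lborel) = 0
             \<longrightarrow> (AE v in lborel. \<mu> v = lam v))
         \<and> (\<exists>C'. \<forall>v. norm (lam v) \<le> C' * M v
                 \<and> (\<forall>i j. \<exists>p. ((\<lambda>t. lam (v + t *\<^sub>R axis i 1) $ j) has_real_derivative p) (at 0)
                             \<and> \<bar>p\<bar> \<le> C' * M v))"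
proof -
  interpret linear_boltzmann M gradM DgradM \<sigma> D\<sigma> C \<nu>1 \<nu>2
    by unfold_locales (fact M_pos M_even M_int(1) M_int(2) M_grad M_grad_bound M_hess M_hess_bound
        sigma_sym nu12(1) sigma_bounds sigma_grad sigma_grad_bound)+
  show ?thesis
    by (rule exists_unique_vector_solution[OF gradM_component_measurable
          M_dominated_gradM_component integral_gradM_component])
qed

end
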